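(* Let $(X_1,d_1)$ and $(X_2,d_2)$ be metric spaces admitting weak convergences $w_1,w_2$ respectively, and let $1\le q<\infty$. Then $w_1\otimes w_2$ is a weak convergence for $(X_1\times X_2,d_1\otimes_q d_2)$.
   Context: A convergence $c$ on a set $X$ is a rule assigning at most one point of $X$ as the "limit" of each sequence in $X$, such that whenever a sequence has limit $x$, every subsequence also has limit $x$; we write $x_n\to x$ in $c$. A convergence $w$ on $X$ is a weak convergence for $(X,d)$ if: (W1) whenever $\{x_n\}$ and $y$ in $X$ satisfy $\sup_n d(x_n,y)<\infty$, there are a subsequence $\{n_k\}$ and $x\in X$ with $x_{n_k}\to x$ in $w$; (W2) whenever $x_n\to x$ in $w$, $d(x,y)\le\liminf_n d(x_n,y)$ for all $y\in X$; (W3) whenever $x_n\to x$ in $w$ and $d(x_n,y)\to d(x,y)$ for some $y\in X$, then $d(x_n,x)\to0$. The metric $d_1\otimes_q d_2$ on $X_1\times X_2$ is $((x_1,x_2),(x_1',x_2'))\mapsto (d_1^q(x_1,x_1')+d_2^q(x_2,x_2'))^{1/q}$. The convergence $w_1\otimes w_2$ on $X_1\times X_2$ declares $(x_{1,n},x_{2,n})\to(x_1,x_2)$ iff $x_{1,n}\to x_1$ in $w_1$ and $x_{2,n}\to x_2$ in $w_2$. *)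

theory Defs
  imports "HOL-Analysis.Analysis"
begin

definition is_convergence :: "'a set \<Rightarrow> ((nat \<Rightarrow> 'a) \<Rightarrow> 'a \<Rightarrow> bool) \<Rightarrow> bool" where
  "is_convergence X c \<longleftrightarrow>
     (\<forall>s x. c s x \<longrightarrow> range s \<subseteq> X \<and> x \<in> X) \<and>
     (\<forall>s x y. c s x \<and> c s y \<longrightarrow> x = y) \<and>
     (\<forall>s x (r::nat\<Rightarrow>nat). c s x \<and> strict_mono r \<longrightarrow> c (s \<circ> r) x)"

definition is_weak_convergence ::
  "'a set \<Rightarrow> ('a \<Rightarrow> 'a \<Rightarrow> real) \<Rightarrow> ((nat \<Rightarrow> 'a) \<Rightarrow> 'a \<Rightarrow> bool) \<Rightarrow> bool" where
  "is_weak_convergence X d w \<longleftrightarrow>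
     is_convergence X w \<and>
     \<comment> \<open>(W1)\<close>
     (\<forall>s y. range s \<subseteq> X \<and> y \<in> X \<and> bdd_above (range (\<lambda>n. d (s n) y)) \<longrightarrow>
        (\<exists>(r::nat\<Rightarrow>nat) x. strict_mono r \<and> x \<in> X \<and> w (s \<circ> r) x)) \<and>
     \<comment> \<open>(W2)\<close>
     (\<forall>s x y. w s x \<and> y \<in> X \<longrightarrow> ereal (d x y) \<le> liminf (\<lambda>n. ereal (d (s n) y))) \<and>
     \<comment> \<open>(W3)\<close>
     (\<forall>s x y. w s x \<and> y \<in> X \<and> (\<lambda>n. d (s n) y) \<longlonglongrightarrow> d x y \<longrightarrow>
        (\<lambda>n. d (s n) x) \<longlonglongrightarrow> 0)"

definition q_prod_metric ::
  "real \<Rightarrow> ('a \<Rightarrow> 'a \<Rightarrow> real) \<Rightarrow> ('b \<Rightarrow> 'b \<Rightarrow> real) \<Rightarrow> ('a \<times> 'b) \<Rightarrow> ('a \<times> 'b) \<Rightarrow> real" where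
  "q_prod_metric q d1 d2 = (\<lambda>p p'. (d1 (fst p) (fst p') powr q + d2 (snd p) (snd p') powr q) powr (1 / q))"

definition prod_convergence ::
  "((nat \<Rightarrow> 'a) \<Rightarrow> 'a \<Rightarrow> bool) \<Rightarrow> ((nat \<Rightarrow> 'b) \<Rightarrow> 'b \<Rightarrow> bool) \<Rightarrow> (nat \<Rightarrow> 'a \<times> 'b) \<Rightarrow> 'a \<times> 'b \<Rightarrow> bool" where
  "prod_convergence w1 w2 = (\<lambda>s p. w1 (fst \<circ> s) (fst p) \<and> w2 (snd \<circ> s) (snd p))"

end

theory Submission
  imports Defs
begin

text \<open>Everything is checked coordinatewise. For (W1), each coordinate distance is dominated
  by the product distance, so one extracts a \<open>w\<^sub>1\<close>-convergent subsequence and then a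
  \<open>w\<^sub>2\<close>-convergent subsequence of it. For (W2), the asymptotic lower bounds
  \<open>d\<^sub>i(x\<^sub>i,y\<^sub>i) \<le> liminf d\<^sub>i(x\<^sub>i\<^sub>,\<^sub>n,y\<^sub>i)\<close> survive \<open>t \<mapsto> t\<^sup>q\<close>, addition and \<open>t \<mapsto> t\<^bsup>1/q\<^esup>\<close>.
  For (W3), the sum of the \<open>q\<close>-th powers \<open>d\<^sub>i(x\<^sub>i\<^sub>,\<^sub>n,y\<^sub>i)\<^sup>q\<close> converges to the sum of the limits
  while each summand is asymptotically bounded below by its limit (by (W2)); hence each
  summand converges, and (W3) in the factors gives \<open>d\<^sub>i(x\<^sub>i\<^sub>,\<^sub>n,x\<^sub>i) \<rightarrow> 0\<close>.\<close>

lemma le_liminf_ereal_iff: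
  fixes a :: "nat \<Rightarrow> real"
  shows "ereal A \<le> liminf (\<lambda>n. ereal (a n)) \<longleftrightarrow> (\<forall>c<A. eventually (\<lambda>n. c < a n) sequentially)"
proof -
  have "(\<forall>c<ereal A. eventually (\<lambda>n. c < ereal (a n)) sequentially) \<longleftrightarrow>
        (\<forall>c<A. eventually (\<lambda>n. c < a n) sequentially)"
  proof (intro iffI allI impI)
    fix c :: real
    assume lower: "\<forall>c<ereal A. eventually (\<lambda>n. c < ereal (a n)) sequentially" and "c < A"
    with lower[rule_format, of "ereal c"] show "eventually (\<lambda>n. c < a n) sequentially"
      by simp
  next
    fix c :: ereal
    assume "\<forall>c<A. eventually (\<lambda>n. c < a n) sequentially" "c < ereal A"
    then show "eventually (\<lambda>n. c < ereal (a n)) sequentially"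
      by (cases c) auto
  qed
  then show ?thesis
    by (simp add: le_Liminf_iff)
qed

lemma eventually_gt_powr:
  fixes a :: "nat \<Rightarrow> real"
  assumes lower: "\<forall>c<A. eventually (\<lambda>n. c < a n) sequentially"
    and "\<And>n. 0 \<le> a n" "0 \<le> A" "0 < q"
  shows "\<forall>c < A powr q. eventually (\<lambda>n. c < a n powr q) sequentially"
proof (intro allI impI)
  fix c assume c: "c < A powr q"
  show "eventually (\<lambda>n. c < a n powr q) sequentially"
  proof (cases "c < 0")
    case True
    then show ?thesis
      by (intro always_eventually allI) (meson le_less_trans not_le powr_ge_zero)
  next
    case False
    then have c_root: "(c powr (1/q)) powr q = c"
      using \<open>0 < q\<close> by (simp add: powr_powr)
    have "c powr (1/q) < A"
    proof (rule ccontr)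
      assume "\<not> c powr (1/q) < A"
      then have "A powr q \<le> c"
        using powr_mono2[of q A "c powr (1/q)"] \<open>0 \<le> A\<close> \<open>0 < q\<close> c_root by simp
      with c show False by simp
    qed
    with lower have "eventually (\<lambda>n. c powr (1/q) < a n) sequentially"
      by blast
    then show ?thesis
    proof (rule eventually_mono)
      fix n assume "c powr (1/q) < a n"
      then have "(c powr (1/q)) powr q < a n powr q"
        using \<open>0 < q\<close> by (intro powr_less_mono2) auto
      with c_root show "c < a n powr q" by simp
    qed
  qed
qed

lemma eventually_gt_add:
  fixes a b :: "nat \<Rightarrow> real"
  assumes "\<forall>c<A. eventually (\<lambda>n. c < a n) sequentially"
    and "\<forall>c<B. eventually (\<lambda>n. c < b n) sequentially"
  shows "\<forall>c<A + B. eventually (\<lambda>n. c < a n + b n) sequentially"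
proof (intro allI impI)
  fix c assume "c < A + B"
  then have "A - (A + B - c)/2 < A" "B - (A + B - c)/2 < B"
    by simp_all
  with assms have "eventually (\<lambda>n. A - (A + B - c)/2 < a n) sequentially"
    "eventually (\<lambda>n. B - (A + B - c)/2 < b n) sequentially"
    by blast+
  then show "eventually (\<lambda>n. c < a n + b n) sequentially"
    by eventually_elim (auto simp: field_simps)
qed

lemma tendsto_of_tendsto_add:
  fixes a b :: "nat \<Rightarrow> real"
  assumes lower_a: "\<forall>c<A. eventually (\<lambda>n. c < a n) sequentially"
    and lower_b: "\<forall>c<B. eventually (\<lambda>n. c < b n) sequentially"
    and sum: "(\<lambda>n. a n + b n) \<longlonglongrightarrow> A + B"
  shows "a \<longlonglongrightarrow> A"
proof (rule order_tendstoI)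
  fix c assume "c < A"
  with lower_a show "eventually (\<lambda>n. c < a n) sequentially"
    by blast
next
  fix c assume "A < c"
  then have "eventually (\<lambda>n. a n + b n < A + B + (c - A)/2) sequentially"
    by (intro order_tendstoD(2)[OF sum]) simp
  moreover have "eventually (\<lambda>n. B - (c - A)/2 < b n) sequentially"
    using lower_b \<open>A < c\<close> by simp
  ultimately show "eventually (\<lambda>n. a n < c) sequentially"
    by eventually_elim (auto simp: field_simps)
qed

lemma tendsto_of_tendsto_powr:
  fixes a :: "nat \<Rightarrow> real"
  assumes "(\<lambda>n. a n powr q) \<longlonglongrightarrow> A powr q" "\<And>n. 0 \<le> a n" "0 \<le> A" "0 < q"
  shows "a \<longlonglongrightarrow> A"
proof -
  have "(\<lambda>n. (a n powr q) powr (1/q)) \<longlonglongrightarrow> (A powr q) powr (1/q)"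
    by (intro tendsto_powr' tendsto_const assms(1)) (use assms in auto)
  with assms show ?thesis
    by (simp add: powr_powr)
qed

lemma q_prod_metric_powr:
  assumes "\<And>x y. 0 \<le> d1 x y" "\<And>x y. 0 \<le> d2 x y" "0 < q"
  shows "q_prod_metric q d1 d2 p p' powr q = d1 (fst p) (fst p') powr q + d2 (snd p) (snd p') powr q"
  using assms by (simp add: q_prod_metric_def powr_powr add_nonneg_nonneg)

lemma q_prod_metric_nonneg: "0 \<le> q_prod_metric q d1 d2 p p'"
  by (simp add: q_prod_metric_def)

lemma q_prod_metric_ge_fst:
  assumes "\<And>x y. 0 \<le> d1 x y" "\<And>x y. 0 \<le> d2 x y" "0 < q"
  shows "d1 (fst p) (fst p') \<le> q_prod_metric q d1 d2 p p'"
proof -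
  have "d1 (fst p) (fst p') = (d1 (fst p) (fst p') powr q) powr (1/q)"
    using assms by (simp add: powr_powr)
  also have "\<dots> \<le> q_prod_metric q d1 d2 p p'"
    unfolding q_prod_metric_def using assms by (intro powr_mono2) auto
  finally show ?thesis .
qed

lemma q_prod_metric_ge_snd:
  assumes "\<And>x y. 0 \<le> d1 x y" "\<And>x y. 0 \<le> d2 x y" "0 < q"
  shows "d2 (snd p) (snd p') \<le> q_prod_metric q d1 d2 p p'"
  using q_prod_metric_ge_fst[of d2 d1 q "prod.swap p" "prod.swap p'"] assms
  by (simp add: q_prod_metric_def add.commute)

lemma convergence_in_space:
  "is_convergence X c \<Longrightarrow> c s x \<Longrightarrow> range s \<subseteq> X \<and> x \<in> X"
  unfolding is_convergence_def by blast

lemma convergence_subseq: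
  "is_convergence X c \<Longrightarrow> c s x \<Longrightarrow> strict_mono r \<Longrightarrow> c (s \<circ> r) x"
  unfolding is_convergence_def by blast

lemma convergence_unique:
  "is_convergence X c \<Longrightarrow> c s x \<Longrightarrow> c s y \<Longrightarrow> x = y"
  unfolding is_convergence_def by blast

lemma is_convergence_prod_convergence:
  assumes conv1: "is_convergence X1 w1" and conv2: "is_convergence X2 w2"
  shows "is_convergence (X1 \<times> X2) (prod_convergence w1 w2)"
  unfolding is_convergence_def
proof (intro conjI; intro allI impI)
  fix s x assume "prod_convergence w1 w2 s x"
  then have "w1 (fst \<circ> s) (fst x)" "w2 (snd \<circ> s) (snd x)"
    by (simp_all add: prod_convergence_def)
  with convergence_in_space[OF conv1] convergence_in_space[OF conv2]
  have "range (fst \<circ> s) \<subseteq> X1 \<and> fst x \<in> X1" "range (snd \<circ> s) \<subseteq> X2 \<and> snd x \<in> X2"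
    by blast+
  then show "range s \<subseteq> X1 \<times> X2 \<and> x \<in> X1 \<times> X2"
    by (auto simp: image_subset_iff mem_Times_iff)
next
  fix s x y assume "prod_convergence w1 w2 s x \<and> prod_convergence w1 w2 s y"
  then show "x = y"
    using convergence_unique[OF conv1] convergence_unique[OF conv2]
    by (auto simp: prod_convergence_def prod_eq_iff)
next
  fix s x and r :: "nat \<Rightarrow> nat"
  assume "prod_convergence w1 w2 s x \<and> strict_mono r"
  then show "prod_convergence w1 w2 (s \<circ> r) x"
    using convergence_subseq[OF conv1] convergence_subseq[OF conv2]
    by (auto simp: prod_convergence_def o_assoc)
qed

lemma weak_convergence_is_convergence:
  "is_weak_convergence X d w \<Longrightarrow> is_convergence X w"
  unfolding is_weak_convergence_def by blast

lemma weak_convergence_bounded_subseq: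
  fixes s :: "nat \<Rightarrow> 'a"
  assumes "is_weak_convergence X d w" "range s \<subseteq> X" "y \<in> X" "\<And>n. d (s n) y \<le> M"
  obtains r :: "nat \<Rightarrow> nat" and x where "strict_mono r" "x \<in> X" "w (s \<circ> r) x"
proof -
  have "bdd_above (range (\<lambda>n. d (s n) y))"
    using assms(4) by (intro bdd_aboveI2[where M = M])
  with assms(1-3) have "\<exists>(r::nat\<Rightarrow>nat) x. strict_mono r \<and> x \<in> X \<and> w (s \<circ> r) x"
    unfolding is_weak_convergence_def by blast
  with that show ?thesis
    by blast
qed

lemma weak_convergence_liminf:
  "is_weak_convergence X d w \<Longrightarrow> w s x \<Longrightarrow> y \<in> X \<Longrightarrow>
    ereal (d x y) \<le> liminf (\<lambda>n. ereal (d (s n) y))"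
  unfolding is_weak_convergence_def by blast

lemma weak_convergence_tendsto_zero:
  "is_weak_convergence X d w \<Longrightarrow> w s x \<Longrightarrow> y \<in> X \<Longrightarrow> (\<lambda>n. d (s n) y) \<longlonglongrightarrow> d x y \<Longrightarrow>
    (\<lambda>n. d (s n) x) \<longlonglongrightarrow> 0"
  unfolding is_weak_convergence_def by blast

lemma weak_convergence_powr_lower:
  assumes "is_weak_convergence X d w" "\<And>x y. 0 \<le> d x y" "0 < q" "w s x" "y \<in> X"
  shows "\<forall>c < d x y powr q. eventually (\<lambda>n. c < d (s n) y powr q) sequentially"
  using weak_convergence_liminf[OF assms(1,4,5)] assms(2,3)
  by (intro eventually_gt_powr) (auto simp: le_liminf_ereal_iff)

locale weak_convergence_factors =
  fixes X1 :: "'a set" and d1 :: "'a \<Rightarrow> 'a \<Rightarrow> real" and w1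
    and X2 :: "'b set" and d2 :: "'b \<Rightarrow> 'b \<Rightarrow> real" and w2
    and q :: real
  assumes nonneg1: "\<And>x y. 0 \<le> d1 x y" and nonneg2: "\<And>x y. 0 \<le> d2 x y"
    and weak1: "is_weak_convergence X1 d1 w1" and weak2: "is_weak_convergence X2 d2 w2"
    and q_pos: "0 < q"
begin

abbreviation D where "D \<equiv> q_prod_metric q d1 d2"
abbreviation w where "w \<equiv> prod_convergence w1 w2"

lemmas D_powr = q_prod_metric_powr[of d1 d2 q, OF nonneg1 nonneg2 q_pos]
lemmas D_ge_fst = q_prod_metric_ge_fst[of d1 d2 q, OF nonneg1 nonneg2 q_pos]
lemmas D_ge_snd = q_prod_metric_ge_snd[of d1 d2 q, OF nonneg1 nonneg2 q_pos]

lemma coordinate_convergence: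
  assumes "w s x" "y \<in> X1 \<times> X2"
  shows "w1 (fst \<circ> s) (fst x)" "fst y \<in> X1" "w2 (snd \<circ> s) (snd x)" "snd y \<in> X2"
  using assms by (auto simp: prod_convergence_def mem_Times_iff)

lemma coordinate_powr_lower:
  assumes "w s x" "y \<in> X1 \<times> X2"
  shows "\<forall>c < d1 (fst x) (fst y) powr q.
           eventually (\<lambda>n. c < d1 (fst (s n)) (fst y) powr q) sequentially"
    and "\<forall>c < d2 (snd x) (snd y) powr q.
           eventually (\<lambda>n. c < d2 (snd (s n)) (snd y) powr q) sequentially"
  using weak_convergence_powr_lower[OF weak1 nonneg1 q_pos coordinate_convergence(1,2)[OF assms]]
    weak_convergence_powr_lower[OF weak2 nonneg2 q_pos coordinate_convergence(3,4)[OF assms]]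
  by simp_all

lemma prod_bounded_subseq:
  fixes s :: "nat \<Rightarrow> 'a \<times> 'b"
  assumes s: "range s \<subseteq> X1 \<times> X2" and y: "y \<in> X1 \<times> X2" and bound: "\<And>n. D (s n) y \<le> M"
  obtains r :: "nat \<Rightarrow> nat" and x where "strict_mono r" "x \<in> X1 \<times> X2" "w (s \<circ> r) x"
proof -
  have in_X1: "range (fst \<circ> s) \<subseteq> X1" "fst y \<in> X1"
    and in_X2: "range (snd \<circ> s \<circ> r) \<subseteq> X2" "snd y \<in> X2" for r :: "nat \<Rightarrow> nat"
    using s y by (auto simp: mem_Times_iff image_subset_iff)
  have bound1: "d1 ((fst \<circ> s) n) (fst y) \<le> M"
    and bound2: "d2 ((snd \<circ> s \<circ> r) n) (snd y) \<le> M" for n and r :: "nat \<Rightarrow> nat"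
    using order_trans[OF D_ge_fst bound]
      order_trans[OF D_ge_snd bound]
    by simp_all
  obtain r1 x1 where r1: "strict_mono r1" "x1 \<in> X1" "w1 (fst \<circ> s \<circ> r1) x1"
    by (rule weak_convergence_bounded_subseq[OF weak1 in_X1 bound1])
  obtain r2 x2 where r2: "strict_mono r2" "x2 \<in> X2" "w2 (snd \<circ> s \<circ> r1 \<circ> r2) x2"
    by (rule weak_convergence_bounded_subseq[OF weak2 in_X2 bound2])
  have "w1 (fst \<circ> s \<circ> r1 \<circ> r2) x1"
    using convergence_subseq[OF weak_convergence_is_convergence[OF weak1]] r1 r2 by blast
  with r2 have "w (s \<circ> (r1 \<circ> r2)) (x1, x2)"
    by (simp add: prod_convergence_def comp_assoc)
  moreover have "strict_mono (r1 \<circ> r2)"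
    using r1 r2 strict_mono_o by blast
  ultimately show ?thesis
    using that r1 r2 by blast
qed

lemma prod_liminf:
  assumes "w s x" "y \<in> X1 \<times> X2"
  shows "ereal (D x y) \<le> liminf (\<lambda>n. ereal (D (s n) y))"
proof -
  have "\<forall>c < D x y powr q. eventually (\<lambda>n. c < D (s n) y powr q) sequentially"
    using eventually_gt_add[OF coordinate_powr_lower[OF assms]]
    by (simp add: D_powr)
  then have "\<forall>c < (D x y powr q) powr (1/q).
      eventually (\<lambda>n. c < (D (s n) y powr q) powr (1/q)) sequentially"
    by (rule eventually_gt_powr) (use q_pos in auto)
  then show ?thesis
    using q_pos by (simp add: le_liminf_ereal_iff powr_powr q_prod_metric_nonneg)
qed

lemma prod_tendsto_zero:
  assumes "w s x" "y \<in> X1 \<times> X2" and lim: "(\<lambda>n. D (s n) y) \<longlonglongrightarrow> D x y"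
  shows "(\<lambda>n. D (s n) x) \<longlonglongrightarrow> 0"
proof -
  note coords = coordinate_convergence[OF assms(1,2)]
  have "(\<lambda>n. D (s n) y powr q) \<longlonglongrightarrow> D x y powr q"
    using q_pos by (intro tendsto_powr' tendsto_const lim) (auto simp: q_prod_metric_def)
  then have sum: "(\<lambda>n. d1 (fst (s n)) (fst y) powr q + d2 (snd (s n)) (snd y) powr q)
      \<longlonglongrightarrow> d1 (fst x) (fst y) powr q + d2 (snd x) (snd y) powr q"
    by (simp add: D_powr)
  have "(\<lambda>n. d1 (fst (s n)) (fst y) powr q) \<longlonglongrightarrow> d1 (fst x) (fst y) powr q"
    using coordinate_powr_lower[OF assms(1,2)] sum by (rule tendsto_of_tendsto_add)
  then have "(\<lambda>n. d1 (fst (s n)) (fst y)) \<longlonglongrightarrow> d1 (fst x) (fst y)"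
    by (rule tendsto_of_tendsto_powr) (use nonneg1 q_pos in auto)
  then have "(\<lambda>n. d1 (fst (s n)) (fst x)) \<longlonglongrightarrow> 0"
    using weak_convergence_tendsto_zero[OF weak1 coords(1,2)] by simp
  moreover
  have "(\<lambda>n. d2 (snd (s n)) (snd y) powr q) \<longlonglongrightarrow> d2 (snd x) (snd y) powr q"
    using coordinate_powr_lower(2,1)[OF assms(1,2)] sum[unfolded add.commute[of "d1 _ _ powr q"]]
    by (rule tendsto_of_tendsto_add)
  then have "(\<lambda>n. d2 (snd (s n)) (snd y)) \<longlonglongrightarrow> d2 (snd x) (snd y)"
    by (rule tendsto_of_tendsto_powr) (use nonneg2 q_pos in auto)
  then have "(\<lambda>n. d2 (snd (s n)) (snd x)) \<longlonglongrightarrow> 0"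
    using weak_convergence_tendsto_zero[OF weak2 coords(3,4)] by simp
  ultimately have "(\<lambda>n. (d1 (fst (s n)) (fst x) powr q + d2 (snd (s n)) (snd x) powr q) powr (1/q))
      \<longlonglongrightarrow> (0 powr q + 0 powr q) powr (1/q)"
    using q_pos by (intro tendsto_intros) (auto simp: nonneg1 nonneg2)
  then show ?thesis
    by (simp add: q_prod_metric_def)
qed

theorem prod_weak_convergence: "is_weak_convergence (X1 \<times> X2) D w"
  unfolding is_weak_convergence_def
proof (intro conjI allI impI)
  show "is_convergence (X1 \<times> X2) w"
    using is_convergence_prod_convergence weak_convergence_is_convergence[OF weak1]
      weak_convergence_is_convergence[OF weak2] .
next
  fix s :: "nat \<Rightarrow> 'a \<times> 'b" and y
  assume "range s \<subseteq> X1 \<times> X2 \<and> y \<in> X1 \<times> X2 \<and> bdd_above (range (\<lambda>n. D (s n) y))"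
  then have s: "range s \<subseteq> X1 \<times> X2" and y: "y \<in> X1 \<times> X2"
    and "bdd_above (range (\<lambda>n. D (s n) y))"
    by simp_all
  then obtain M where "\<And>n. D (s n) y \<le> M"
    by (auto simp: bdd_above_def)
  then obtain r :: "nat \<Rightarrow> nat" and x where "strict_mono r" "x \<in> X1 \<times> X2" "w (s \<circ> r) x"
    by (rule prod_bounded_subseq[OF s y])
  then show "\<exists>(r::nat\<Rightarrow>nat) x. strict_mono r \<and> x \<in> X1 \<times> X2 \<and> w (s \<circ> r) x"
    by blast
next
  fix s x y assume "w s x \<and> y \<in> X1 \<times> X2"
  then show "ereal (D x y) \<le> liminf (\<lambda>n. ereal (D (s n) y))"
    using prod_liminf by blast
next
  fix s x y assume "w s x \<and> y \<in> X1 \<times> X2 \<and> (\<lambda>n. D (s n) y) \<longlonglongrightarrow> D x y"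
  then show "(\<lambda>n. D (s n) x) \<longlonglongrightarrow> 0"
    using prod_tendsto_zero by blast
qed

end

theorem proposition2p8:
  fixes X1 :: "'a set" and X2 :: "'b set" and q :: real
  assumes "Metric_space X1 d1" and "Metric_space X2 d2"
    and "is_weak_convergence X1 d1 w1" and "is_weak_convergence X2 d2 w2"
    and "1 \<le> q"
  shows "is_weak_convergence (X1 \<times> X2) (q_prod_metric q d1 d2) (prod_convergence w1 w2)"
proof -
  interpret weak_convergence_factors X1 d1 w1 X2 d2 w2 q
    using assms by unfold_locales (auto simp: Metric_space.nonneg)
  show ?thesis
    by (rule prod_weak_convergence)
qed

end
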